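(* Let $k$ be a field, $E$ a finite-dimensional $k$-vector space, and $f\in\operatorname{End}_k(E)$ an endomorphism with annihilating polynomial $x^n$. Let $\bigcup_{j=1}^{r}\{e_j,f(e_j),\dots,f^{n_j-1}(e_j)\}$ be a Jordan basis of $E$ induced by $f$ (so $f^{n_j}(e_j)=0$ and these vectors form a basis of $E$). Then the generalized inverses $g\in\operatorname{End}_k(E)$ of $f$ are exactly the linear maps determined by $$g(f^i(e_j))=\begin{cases} f^{i-1}(e_j)+\sum_{s=1}^{r}\lambda^{s}_{j,i} f^{n_s-1}(e_s) & \text{if } i\ge 1,\\ \sum_{s=1}^{r}\sum_{h=0}^{n_s-1}\alpha^{s}_{j,h} f^{h}(e_s) & \text{if } i=0,\end{cases}$$ for $j\in\{1,\dots,r\}$ and $i\in\{0,\dots,n_j-1\}$, where $\lambda^{s}_{j,i},\alpha^{s}_{j,h}\in k$ are arbitrary scalars.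
   Context: A generalized inverse of an endomorphism $f$ of $E$ is an endomorphism $g$ of $E$ with $f\circ g\circ f=f$. *)

theory Defs
  imports Complex_Main
begin

definition gen_inverse :: "('k::field \<Rightarrow> 'e::ab_group_add \<Rightarrow> 'e) \<Rightarrow> ('e \<Rightarrow> 'e) \<Rightarrow> ('e \<Rightarrow> 'e) \<Rightarrow> bool" where
  "gen_inverse scale f g \<longleftrightarrow> Vector_Spaces.linear scale scale g \<and> f \<circ> g \<circ> f = f"

definition jordan_basis ::
  "('k::field \<Rightarrow> 'e::ab_group_add \<Rightarrow> 'e) \<Rightarrow> ('e \<Rightarrow> 'e) \<Rightarrow> nat \<Rightarrow> (nat \<Rightarrow> 'e) \<Rightarrow> (nat \<Rightarrow> nat) \<Rightarrow> bool" where
  "jordan_basis scale f r e nn \<longleftrightarrow>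
     (\<forall>j<r. 1 \<le> nn j \<and> (f ^^ nn j) (e j) = 0) \<and>
     inj_on (\<lambda>(j, i). (f ^^ i) (e j)) {(j, i). j < r \<and> i < nn j} \<and>
     \<not> module.dependent scale ((\<lambda>(j, i). (f ^^ i) (e j)) ` {(j, i). j < r \<and> i < nn j}) \<and>
     module.span scale ((\<lambda>(j, i). (f ^^ i) (e j)) ` {(j, i). j < r \<and> i < nn j}) = UNIV"

end

theory Submission
  imports Defs
begin

text \<open>Since f o g o f and f are linear, f o g o f = f need only be checked on the basis vectors
  f^i(e j), where (for i + 1 < nn j) it says that g(f^(i+1)(e j)) - f^i(e j) lies in the kernel
  of f; for i + 1 = nn j both sides vanish. Because f shifts every chain by one step, its kernel
  is spanned by the chain ends f^(nn s - 1)(e s). So g is a generalized inverse exactly when its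
  values on the non-heads f^i(e j), i \<ge> 1, are f^(i-1)(e j) up to a kernel element, while its
  values on the heads e j are arbitrary; and since the Jordan basis is independent, every such
  prescription of values extends to a linear map.\<close>

lemma (in module) coeffs_eq_0_if_sum_eq_0:
  assumes "finite I" "inj_on b I" "\<not> dependent (b ` I)"
    and "(\<Sum>p\<in>I. scale (c p) (b p)) = 0" "p \<in> I"
  shows "c p = 0"
proof -
  define u where "u w = c (inv_into I b w)" for w
  have "(\<Sum>w\<in>b ` I. scale (u w) w) = (\<Sum>p\<in>I. scale (u (b p)) (b p))"
    by (rule sum.reindex[OF assms(2), unfolded comp_def])
  also have "\<dots> = (\<Sum>p\<in>I. scale (c p) (b p))"
    by (rule sum.cong) (auto simp: u_def inv_into_f_f[OF assms(2)])
  finally have "\<forall>w\<in>b ` I. u w = 0"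
    using assms(1,3,4) dependent_finite[of "b ` I"] by auto
  then show ?thesis
    using assms(5) by (auto simp: u_def inv_into_f_f[OF assms(2)])
qed

lemma (in module) ex_coeffs_if_span:
  assumes "finite I" "inj_on b I" "x \<in> span (b ` I)"
  shows "\<exists>c. x = (\<Sum>p\<in>I. scale (c p) (b p))"
proof -
  obtain u where "x = (\<Sum>w\<in>b ` I. scale (u w) w)"
    using assms(1,3) span_finite[of "b ` I"] by auto
  also have "\<dots> = (\<Sum>p\<in>I. scale (u (b p)) (b p))"
    by (rule sum.reindex[OF assms(2), unfolded comp_def])
  finally show ?thesis
    by (rule exI[of _ "\<lambda>p. u (b p)"])
qed

lemma gen_inverse_iff_on_spanning_set:
  assumes "vector_space scale" "Vector_Spaces.linear scale scale f"
    and "Vector_Spaces.linear scale scale g" "module.span scale B = UNIV"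
  shows "gen_inverse scale f g \<longleftrightarrow> (\<forall>b\<in>B. f (g (f b)) = f b)"
proof
  assume "\<forall>b\<in>B. f (g (f b)) = f b"
  then have "(f \<circ> g \<circ> f) x = f x" for x
    using assms vector_space_pair.linear_eq_on[of scale scale "f \<circ> g \<circ> f" f x B]
    by (simp add: vector_space_pair_def Vector_Spaces.linear_compose)
  then show "gen_inverse scale f g"
    using assms(3) by (auto simp: gen_inverse_def)
qed (auto simp: gen_inverse_def fun_eq_iff)

locale jordan_chains = vector_space scale
  for scale :: "'k::field \<Rightarrow> 'e::ab_group_add \<Rightarrow> 'e" +
  fixes f :: "'e \<Rightarrow> 'e" and r :: nat and e :: "nat \<Rightarrow> 'e" and nn :: "nat \<Rightarrow> nat"
  assumes linear_f: "Vector_Spaces.linear scale scale f"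
    and jordan_basis: "jordan_basis scale f r e nn"
begin

definition chain_index :: "(nat \<times> nat) set" where
  "chain_index = {(j, i). j < r \<and> i < nn j}"

definition chain_vec :: "nat \<times> nat \<Rightarrow> 'e" where
  "chain_vec = (\<lambda>(j, i). (f ^^ i) (e j))"

definition basis_comb :: "(nat \<Rightarrow> nat \<Rightarrow> 'k) \<Rightarrow> 'e" where
  "basis_comb c = (\<Sum>s<r. \<Sum>h<nn s. scale (c s h) ((f ^^ h) (e s)))"

definition kernel_comb :: "(nat \<Rightarrow> 'k) \<Rightarrow> 'e" where
  "kernel_comb \<mu> = (\<Sum>s<r. scale (\<mu> s) ((f ^^ (nn s - 1)) (e s)))"

lemma chain_length_pos: "j < r \<Longrightarrow> 1 \<le> nn j"
  and chain_end_eq_0: "j < r \<Longrightarrow> (f ^^ nn j) (e j) = 0"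
  using jordan_basis unfolding jordan_basis_def by auto

lemma chain_index_eq_Sigma: "chain_index = Sigma {..<r} (\<lambda>s. {..<nn s})"
  unfolding chain_index_def by auto

lemma finite_chain_index: "finite chain_index"
  unfolding chain_index_eq_Sigma by auto

lemma inj_on_chain_vec: "inj_on chain_vec chain_index"
  and independent_chain_vecs: "\<not> dependent (chain_vec ` chain_index)"
  and span_chain_vecs: "span (chain_vec ` chain_index) = UNIV"
  using jordan_basis unfolding jordan_basis_def chain_index_def chain_vec_def by auto

lemma basis_comb_eq_sum: "basis_comb c = (\<Sum>p\<in>chain_index. scale (c (fst p) (snd p)) (chain_vec p))"
  unfolding basis_comb_def chain_index_eq_Sigma chain_vec_def
  by (subst sum.Sigma) (auto simp: case_prod_beta)

lemma ex_basis_comb: "\<exists>c. v = basis_comb c"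
proof -
  obtain c where "v = (\<Sum>p\<in>chain_index. scale (c p) (chain_vec p))"
    using ex_coeffs_if_span finite_chain_index inj_on_chain_vec span_chain_vecs by blast
  then have "v = basis_comb (\<lambda>s h. c (s, h))"
    by (simp add: basis_comb_eq_sum)
  then show ?thesis
    by blast
qed

lemma basis_comb_eq_0D:
  assumes "basis_comb c = 0" "s < r" "h < nn s"
  shows "c s h = 0"
  using coeffs_eq_0_if_sum_eq_0[OF finite_chain_index inj_on_chain_vec independent_chain_vecs,
      of "\<lambda>p. c (fst p) (snd p)" "(s, h)"] assms
  by (simp add: basis_comb_eq_sum chain_index_def)

lemma f_chain_sum:
  assumes "s < r"
  shows "f (\<Sum>h<nn s. scale (c h) ((f ^^ h) (e s)))
    = (\<Sum>h<nn s. scale (if h = 0 then 0 else c (h - 1)) ((f ^^ h) (e s)))"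
proof -
  interpret F: Vector_Spaces.linear scale scale f by (rule linear_f)
  obtain m where m: "nn s = Suc m"
    using chain_length_pos[OF assms] by (cases "nn s") auto
  have "(f ^^ Suc m) (e s) = 0"
    using chain_end_eq_0[OF assms] m by simp
  moreover have "f (\<Sum>h<nn s. scale (c h) ((f ^^ h) (e s)))
      = (\<Sum>h<Suc m. scale (c h) ((f ^^ Suc h) (e s)))"
    by (simp add: m F.sum F.scale F.add)
  ultimately have "f (\<Sum>h<nn s. scale (c h) ((f ^^ h) (e s)))
      = (\<Sum>h<m. scale (c h) ((f ^^ Suc h) (e s)))"
    by (simp only: sum.lessThan_Suc) simp
  also have "\<dots> = (\<Sum>h<nn s. scale (if h = 0 then 0 else c (h - 1)) ((f ^^ h) (e s)))"
    by (simp only: m sum.lessThan_Suc_shift) (simp del: funpow.simps)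
  finally show ?thesis .
qed

lemma f_basis_comb: "f (basis_comb c) = basis_comb (\<lambda>s h. if h = 0 then 0 else c s (h - 1))"
proof -
  interpret F: Vector_Spaces.linear scale scale f by (rule linear_f)
  show ?thesis
    unfolding basis_comb_def by (subst F.sum) (rule sum.cong, simp_all add: f_chain_sum)
qed

lemma basis_comb_eq_kernel_comb:
  assumes "\<And>s h. s < r \<Longrightarrow> Suc h < nn s \<Longrightarrow> c s h = 0"
  shows "basis_comb c = kernel_comb (\<lambda>s. c s (nn s - 1))"
  unfolding basis_comb_def kernel_comb_def
proof (rule sum.cong)
  fix s assume "s \<in> {..<r}"
  then obtain m where "nn s = Suc m"
    using chain_length_pos[of s] by (cases "nn s") auto
  then show "(\<Sum>h<nn s. scale (c s h) ((f ^^ h) (e s)))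
      = scale (c s (nn s - 1)) ((f ^^ (nn s - 1)) (e s))"
    using assms \<open>s \<in> {..<r}\<close> by (simp add: sum.lessThan_Suc)
qed simp

lemma f_kernel_comb: "f (kernel_comb \<mu>) = 0"
proof -
  interpret F: Vector_Spaces.linear scale scale f by (rule linear_f)
  have "s < r \<Longrightarrow> f ((f ^^ (nn s - 1)) (e s)) = 0" for s
    using chain_end_eq_0[of s] chain_length_pos[of s] by (cases "nn s") auto
  then show ?thesis
    by (simp add: kernel_comb_def F.sum F.scale)
qed

lemma kernel_iff_kernel_comb: "f v = 0 \<longleftrightarrow> (\<exists>\<mu>. v = kernel_comb \<mu>)"
proof
  assume "f v = 0"
  obtain c where c: "v = basis_comb c"
    using ex_basis_comb by blast
  have "c s h = 0" if "s < r" "Suc h < nn s" for s h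
    using basis_comb_eq_0D[of "\<lambda>s h. if h = 0 then 0 else c s (h - 1)" s "Suc h"] \<open>f v = 0\<close> that
    by (simp add: c f_basis_comb)
  then show "\<exists>\<mu>. v = kernel_comb \<mu>"
    using basis_comb_eq_kernel_comb c by blast
qed (auto simp: f_kernel_comb)

lemma gen_inverse_iff_chain_condition:
  assumes "Vector_Spaces.linear scale scale g"
  shows "gen_inverse scale f g \<longleftrightarrow>
    (\<forall>j<r. \<forall>i. 1 \<le> i \<longrightarrow> i < nn j \<longrightarrow> f (g ((f ^^ i) (e j))) = (f ^^ i) (e j))"
    (is "_ \<longleftrightarrow> ?chain_condition")
proof -
  interpret G: Vector_Spaces.linear scale scale g by (rule assms)
  interpret F: Vector_Spaces.linear scale scale f by (rule linear_f)
  have "(\<forall>b\<in>chain_vec ` chain_index. f (g (f b)) = f b) \<longleftrightarrow> ?chain_condition"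
  proof
    assume on_basis: "\<forall>b\<in>chain_vec ` chain_index. f (g (f b)) = f b"
    show ?chain_condition
    proof (intro allI impI)
      fix j i assume "j < r" "1 \<le> i" "i < nn j"
      then have "chain_vec (j, i - 1) \<in> chain_vec ` chain_index"
        by (auto simp: chain_index_def)
      then show "f (g ((f ^^ i) (e j))) = (f ^^ i) (e j)"
        using on_basis \<open>1 \<le> i\<close> by (cases i) (auto simp: chain_vec_def)
    qed
  next
    assume chain_condition: ?chain_condition
    show "\<forall>b\<in>chain_vec ` chain_index. f (g (f b)) = f b"
    proof (clarsimp simp: chain_index_def chain_vec_def)
      fix j i assume "j < r" "i < nn j"
      show "f (g (f ((f ^^ i) (e j)))) = f ((f ^^ i) (e j))"
      proof (cases "Suc i < nn j")
        case True
        then show ?thesis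
          using chain_condition[rule_format, of j "Suc i"] \<open>j < r\<close> by simp
      next
        case False
        then have "nn j = Suc i"
          using \<open>i < nn j\<close> by simp
        then have "f ((f ^^ i) (e j)) = 0"
          using chain_end_eq_0[OF \<open>j < r\<close>] by simp
        then show ?thesis by simp
      qed
    qed
  qed
  then show ?thesis
    using gen_inverse_iff_on_spanning_set[OF vector_space_axioms linear_f assms span_chain_vecs]
    by simp
qed

lemma gen_inverse_iff_values_mod_kernel:
  "gen_inverse scale f g \<longleftrightarrow> Vector_Spaces.linear scale scale g \<and>
    (\<forall>j<r. \<forall>i. 1 \<le> i \<longrightarrow> i < nn j \<longrightarrow>
      (\<exists>\<mu>. g ((f ^^ i) (e j)) = (f ^^ (i - 1)) (e j) + kernel_comb \<mu>))"
proof (cases "Vector_Spaces.linear scale scale g")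
  case True
  interpret F: Vector_Spaces.linear scale scale f by (rule linear_f)
  have "f (g ((f ^^ i) (e j))) = (f ^^ i) (e j) \<longleftrightarrow>
      (\<exists>\<mu>. g ((f ^^ i) (e j)) = (f ^^ (i - 1)) (e j) + kernel_comb \<mu>)" if "1 \<le> i" for i j
  proof -
    have "(f ^^ i) (e j) = f ((f ^^ (i - 1)) (e j))"
      using that by (cases i) auto
    then have "f (g ((f ^^ i) (e j))) = (f ^^ i) (e j) \<longleftrightarrow>
        f (g ((f ^^ i) (e j)) - (f ^^ (i - 1)) (e j)) = 0"
      by (simp add: F.diff)
    also have "\<dots> \<longleftrightarrow> (\<exists>\<mu>. g ((f ^^ i) (e j)) - (f ^^ (i - 1)) (e j) = kernel_comb \<mu>)"
      by (rule kernel_iff_kernel_comb)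
    finally show ?thesis
      by (simp add: algebra_simps)
  qed
  then show ?thesis
    using gen_inverse_iff_chain_condition[OF True] True by simp
qed (simp add: gen_inverse_def)

lemma gen_inverse_iff_parametrized:
  "gen_inverse scale f g \<longleftrightarrow> Vector_Spaces.linear scale scale g \<and>
    (\<exists>lam \<alpha> :: nat \<Rightarrow> nat \<Rightarrow> nat \<Rightarrow> 'k. \<forall>j<r. \<forall>i<nn j.
      g ((f ^^ i) (e j)) =
        (if 1 \<le> i then (f ^^ (i - 1)) (e j) + kernel_comb (\<lambda>s. lam s j i)
         else basis_comb (\<lambda>s h. \<alpha> s j h)))"
  (is "_ \<longleftrightarrow> ?parametrized")
proof
  assume "gen_inverse scale f g"
  then have linear_g: "Vector_Spaces.linear scale scale g"
    and mod_kernel: "\<forall>j<r. \<forall>i. 1 \<le> i \<longrightarrow> i < nn j \<longrightarrow>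
      (\<exists>\<mu>. g ((f ^^ i) (e j)) = (f ^^ (i - 1)) (e j) + kernel_comb \<mu>)"
    by (simp_all add: gen_inverse_iff_values_mod_kernel)
  obtain M where M: "\<And>j i. j < r \<Longrightarrow> 1 \<le> i \<Longrightarrow> i < nn j \<Longrightarrow>
      g ((f ^^ i) (e j)) = (f ^^ (i - 1)) (e j) + kernel_comb (M j i)"
    using mod_kernel by metis
  have "\<forall>j. \<exists>c. g (e j) = basis_comb c"
    using ex_basis_comb by blast
  then obtain C where C: "\<And>j. g (e j) = basis_comb (C j)"
    by metis
  define lam where "lam s j i = M j i s" for s j i
  define \<alpha> where "\<alpha> s j h = C j s h" for s j h
  have "\<forall>j<r. \<forall>i<nn j. g ((f ^^ i) (e j)) =
      (if 1 \<le> i then (f ^^ (i - 1)) (e j) + kernel_comb (\<lambda>s. lam s j i)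
       else basis_comb (\<lambda>s h. \<alpha> s j h))"
    using M C by (auto simp: lam_def \<alpha>_def not_less_eq_eq)
  then show ?parametrized
    using linear_g by blast
next
  assume ?parametrized
  then show "gen_inverse scale f g"
    unfolding gen_inverse_iff_values_mod_kernel by force
qed

lemma ex_linear_with_chain_values:
  "\<exists>g. Vector_Spaces.linear scale scale g \<and> (\<forall>j<r. \<forall>i<nn j. g ((f ^^ i) (e j)) = v j i)"
proof -
  interpret vector_space_pair scale scale
    by (simp add: vector_space_pair_def vector_space_axioms)
  define value_at where
    "value_at w = (case inv_into chain_index chain_vec w of (j, i) \<Rightarrow> v j i)" for w
  obtain g where linear_g: "Vector_Spaces.linear scale scale g"
    and g: "\<forall>w\<in>chain_vec ` chain_index. g w = value_at w"
    using linear_independent_extend[OF independent_chain_vecs, of value_at] by blast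
  have "g ((f ^^ i) (e j)) = v j i" if "j < r" "i < nn j" for j i
  proof -
    have "(j, i) \<in> chain_index"
      using that by (simp add: chain_index_def)
    then show ?thesis
      using g inv_into_f_f[OF inj_on_chain_vec] by (force simp: chain_vec_def value_at_def)
  qed
  then show ?thesis
    using linear_g by blast
qed

end

theorem lemma3p9:
  fixes scale :: "'k::field \<Rightarrow> 'e::ab_group_add \<Rightarrow> 'e"
    and f :: "'e \<Rightarrow> 'e" and n r :: nat and e :: "nat \<Rightarrow> 'e" and nn :: "nat \<Rightarrow> nat"
  assumes "vector_space scale"
    and "Vector_Spaces.linear scale scale f"
    and "f ^^ n = (\<lambda>_. 0)"
    and "jordan_basis scale f r e nn"
  shows "(\<forall>g. gen_inverse scale f g \<longleftrightarrow>
            Vector_Spaces.linear scale scale g \<and>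
            (\<exists>lam \<alpha> :: nat \<Rightarrow> nat \<Rightarrow> nat \<Rightarrow> 'k.
               \<forall>j<r. \<forall>i<nn j.
                 g ((f ^^ i) (e j)) =
                   (if 1 \<le> i
                    then (f ^^ (i - 1)) (e j) + (\<Sum>s<r. scale (lam s j i) ((f ^^ (nn s - 1)) (e s)))
                    else (\<Sum>s<r. \<Sum>h<nn s. scale (\<alpha> s j h) ((f ^^ h) (e s))))))
       \<and> (\<forall>lam \<alpha> :: nat \<Rightarrow> nat \<Rightarrow> nat \<Rightarrow> 'k. \<exists>g. Vector_Spaces.linear scale scale g \<and>
               (\<forall>j<r. \<forall>i<nn j.
                 g ((f ^^ i) (e j)) =
                   (if 1 \<le> i
                    then (f ^^ (i - 1)) (e j) + (\<Sum>s<r. scale (lam s j i) ((f ^^ (nn s - 1)) (e s)))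
                    else (\<Sum>s<r. \<Sum>h<nn s. scale (\<alpha> s j h) ((f ^^ h) (e s))))))"
proof -
  interpret jordan_chains scale f r e nn
    using assms(1,2,4) by (simp add: jordan_chains_def jordan_chains_axioms_def)
  show ?thesis
    by (intro conjI allI)
      (fact gen_inverse_iff_parametrized[unfolded kernel_comb_def basis_comb_def],
       rule ex_linear_with_chain_values)
qed

end
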